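(* For each $\star\in\{\varepsilon,\sigma_0,*,\bowtie\}$, the edge-colored posets $L^{\mathrm{skew}}_{A_{n-1}}((P/Q)^\star)$ and $L^{\mathrm{skew}}_{A_{n-1}}(P/Q)^\star$ are isomorphic (by an isomorphism preserving order and edge colors).
   Context: Fix integers $m\ge n\ge 2$ and weakly decreasing $m$-tuples of nonnegative integers $P=(P_1,\dots,P_m)$ and $Q=(Q_1,\dots,Q_m)$ with $Q_r\le P_r$ for all $r$. The skew shape $P/Q$ is the set of cells $(r,c)$ (row $r$, column $c$, matrix convention) with $Q_r<c\le P_r$; assume no column of $P/Q$ contains more than $n$ cells. For any finite set of cells forming a skew shape (after translation), $L^{\mathrm{skew}}_{A_{n-1}}(\cdot)$ is the set of semistandard fillings with entries in $\{1,\dots,n\}$ (weakly increasing along rows, strictly increasing down columns), ordered by $S\le T$ iff $S_{r,c}\ge T_{r,c}$ for all cells; the covering $S\to T$ where $S,T$ differ only in cell $(r,c)$ with $S_{r,c}=T_{r,c}+1$ gets color $T_{r,c}\in\{1,\dots,n-1\}$. Shape operations: $(P/Q)^\varepsilon:=P/Q$; $(P/Q)^{\sigma_0}$: for each column of $P/Q$ whose cells are in rows $a+1,\dots,a+k$ ($k\ge1$), take the cells of that column in rows $a+k+1,\dots,a+n$ (the empty columns of $P/Q$ contribute nothing); $(P/Q)^*$: rotate $(P/Q)^{\sigma_0}$ by $180^\circ$; $(P/Q)^{\bowtie}$: rotate $P/Q$ by $180^\circ$ (all regarded as skew shapes after translation). Poset operations on a finite poset $R$ with edges colored by $\{1,\dots,n-1\}$: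 $R^\varepsilon:=R$; $R^{\sigma_0}$: same poset, each edge color $i$ replaced by $n-i$; $R^*$: the dual poset $\{t^*\}$ with an edge $t^*\xrightarrow{i}s^*$ for each edge $s\xrightarrow{i}t$ of $R$; $R^{\bowtie}:=(R^{\sigma_0})^*$. *)

theory Defs
  imports Main
begin

type_synonym cell = "int \<times> int"   (* (row, column), matrix convention *)
type_synonym filling = "cell \<Rightarrow> nat"

record 'a cposet =
  carrier :: "'a set"
  le :: "'a \<Rightarrow> 'a \<Rightarrow> bool"
  edge :: "'a \<Rightarrow> nat \<Rightarrow> 'a \<Rightarrow> bool"

definition cposet_iso :: "'a cposet \<Rightarrow> 'b cposet \<Rightarrow> bool" where
  "cposet_iso R S \<longleftrightarrow> (\<exists>f. bij_betw f (carrier R) (carrier S) \<and>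
     (\<forall>x\<in>carrier R. \<forall>y\<in>carrier R. le R x y \<longleftrightarrow> le S (f x) (f y)) \<and>
     (\<forall>x\<in>carrier R. \<forall>y\<in>carrier R. \<forall>i. edge R x i y \<longleftrightarrow> edge S (f x) i (f y)))"

text \<open>The skew shape P/Q; P, Q are m-tuples given as lists, rows indexed 1..m.\<close>
definition skew_shape :: "nat list \<Rightarrow> nat list \<Rightarrow> cell set" where
  "skew_shape P Q = {(r, c). 1 \<le> r \<and> r \<le> int (length P) \<and>
      int (Q ! nat (r - 1)) < c \<and> c \<le> int (P ! nat (r - 1))}"

text \<open>Semistandard fillings of a finite set of cells with entries in {1..n}
  (0 outside the shape, for uniqueness of representation).\<close>
definition ssyt :: "nat \<Rightarrow> cell set \<Rightarrow> filling set" where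
  "ssyt n D = {T. (\<forall>x\<in>D. 1 \<le> T x \<and> T x \<le> n) \<and> (\<forall>x. x \<notin> D \<longrightarrow> T x = 0) \<and>
     (\<forall>r c c'. (r, c) \<in> D \<longrightarrow> (r, c') \<in> D \<longrightarrow> c < c' \<longrightarrow> T (r, c) \<le> T (r, c')) \<and>
     (\<forall>r r' c. (r, c) \<in> D \<longrightarrow> (r', c) \<in> D \<longrightarrow> r < r' \<longrightarrow> T (r, c) < T (r', c))}"

definition L_skew :: "nat \<Rightarrow> cell set \<Rightarrow> filling cposet" where
  "L_skew n D = \<lparr> carrier = ssyt n D,
     le = (\<lambda>S T. \<forall>x\<in>D. S x \<ge> T x),
     edge = (\<lambda>S i T. S \<in> ssyt n D \<and> T \<in> ssyt n D \<and>
        (\<exists>x\<in>D. S x = T x + 1 \<and> T x = i \<and> (\<forall>y. y \<noteq> x \<longrightarrow> S y = T y))) \<rparr>"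

datatype sym = Eps | Sigma0 | Star | Bowtie

definition col_rows :: "cell set \<Rightarrow> int \<Rightarrow> int set" where
  "col_rows D c = {r. (r, c) \<in> D}"

definition shape_sigma0 :: "nat \<Rightarrow> cell set \<Rightarrow> cell set" where
  "shape_sigma0 n D = {(r, c). col_rows D c \<noteq> {} \<and>
      Max (col_rows D c) < r \<and> r \<le> Min (col_rows D c) - 1 + int n}"

definition rot180 :: "cell set \<Rightarrow> cell set" where
  "rot180 D = (\<lambda>(r, c). (- r, - c)) ` D"

fun shape_op :: "nat \<Rightarrow> sym \<Rightarrow> cell set \<Rightarrow> cell set" where
  "shape_op n Eps D = D"
| "shape_op n Sigma0 D = shape_sigma0 n D"
| "shape_op n Star D = rot180 (shape_sigma0 n D)"
| "shape_op n Bowtie D = rot180 D"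

definition poset_sigma0 :: "nat \<Rightarrow> 'a cposet \<Rightarrow> 'a cposet" where
  "poset_sigma0 n R = R\<lparr> edge := (\<lambda>s i t. 1 \<le> i \<and> i < n \<and> edge R s (n - i) t) \<rparr>"

definition poset_dual :: "'a cposet \<Rightarrow> 'a cposet" where
  "poset_dual R = \<lparr> carrier = carrier R, le = (\<lambda>x y. le R y x),
      edge = (\<lambda>t i s. edge R s i t) \<rparr>"

fun poset_op :: "nat \<Rightarrow> sym \<Rightarrow> 'a cposet \<Rightarrow> 'a cposet" where
  "poset_op n Eps R = R"
| "poset_op n Sigma0 R = poset_sigma0 n R"
| "poset_op n Star R = poset_dual R"
| "poset_op n Bowtie R = poset_dual (poset_sigma0 n R)"

end

theory Submission
  imports Defs
begin

text \<open>
  A strictly increasing column occupying rows \<open>a < r \<le> b\<close> with entries in \<open>{1..n}\<close> is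
  determined by its lattice path \<open>t \<mapsto> a + #{r. entry r \<le> t}\<close>, which runs from \<open>a\<close> to \<open>b\<close>
  in \<open>n\<close> steps of size 0 or 1; conversely the entry of row \<open>r\<close> is the number of times
  \<open>t < n\<close> at which the path is still below \<open>r\<close>. Weakly increasing rows mean that the
  paths of successive columns are nested, the order on fillings becomes the pointwise order
  on paths, and an edge of colour \<open>i\<close> raises exactly one path at exactly the time \<open>i\<close>.

  The operation \<open>\<sigma>\<^sub>0\<close> replaces each column \<open>(a, b]\<close> by its complement \<open>(b, a + n]\<close>.
  Reversing a path and shearing it, \<open>N \<mapsto> (\<lambda>t. N (n - t) + t - n)\<close>, turns the paths of
  the complementary columns into paths of the original ones; it preserves nesting and the
  pointwise order and replaces time \<open>i\<close> by \<open>n - i\<close>, which is the recolouring \<open>\<sigma>\<^sub>0\<close>.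
  A rotation by 180 degrees is realised on fillings by \<open>T \<mapsto> n + 1 - T \<circ> rot\<close>, which
  reverses the order and again recolours \<open>i\<close> to \<open>n - i\<close>. The cases \<open>*\<close> and \<open>\<bowtie>\<close>
  are compositions of these two isomorphisms.
\<close>

section \<open>Strict columns and lattice paths\<close>

definition strict_column :: "nat \<Rightarrow> int \<Rightarrow> int \<Rightarrow> (int \<Rightarrow> nat) \<Rightarrow> bool" where
  "strict_column n a b g \<longleftrightarrow> (\<forall>r. a < r \<and> r \<le> b \<longrightarrow> 1 \<le> g r \<and> g r \<le> n) \<and>
     (\<forall>r r'. a < r \<longrightarrow> r < r' \<longrightarrow> r' \<le> b \<longrightarrow> g r < g r')"

definition count_path :: "int \<Rightarrow> int \<Rightarrow> (int \<Rightarrow> nat) \<Rightarrow> nat \<Rightarrow> int" where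
  "count_path a b g t = a + int (card {r. a < r \<and> r \<le> b \<and> g r \<le> t})"

definition lattice_path :: "nat \<Rightarrow> int \<Rightarrow> int \<Rightarrow> (nat \<Rightarrow> int) \<Rightarrow> bool" where
  "lattice_path n a b N \<longleftrightarrow>
     N 0 = a \<and> N n = b \<and> (\<forall>t<n. N t \<le> N (Suc t) \<and> N (Suc t) \<le> N t + 1)"

definition path_filling :: "nat \<Rightarrow> (nat \<Rightarrow> int) \<Rightarrow> int \<Rightarrow> nat" where
  "path_filling n N r = card {t. t < n \<and> N t < r}"

lemma strict_column_range: "strict_column n a b g \<Longrightarrow> a < r \<Longrightarrow> r \<le> b \<Longrightarrow> 1 \<le> g r \<and> g r \<le> n"
  and strict_column_less: "strict_column n a b g \<Longrightarrow> a < r \<Longrightarrow> r < r' \<Longrightarrow> r' \<le> b \<Longrightarrow> g r < g r'"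
  unfolding strict_column_def by auto

lemma finite_count_path_set: "finite {r. (a::int) < r \<and> r \<le> b \<and> g r \<le> t}"
  by (rule finite_subset[of _ "{a<..b}"]) auto

lemma count_path_bounds:
  assumes "a \<le> b" shows "a \<le> count_path a b g t" "count_path a b g t \<le> b"
proof -
  have "card {r. a < r \<and> r \<le> b \<and> g r \<le> t} \<le> card {a<..b}"
    by (rule card_mono) auto
  then show "count_path a b g t \<le> b" using assms by (simp add: count_path_def)
qed (simp add: count_path_def)

lemma count_path_mono: "t \<le> t' \<Longrightarrow> count_path a b g t \<le> count_path a b g t'"
  unfolding count_path_def by (auto intro!: card_mono finite_count_path_set)

lemma count_path_cong:
  "(\<And>r. a < r \<Longrightarrow> r \<le> b \<Longrightarrow> g r = g' r) \<Longrightarrow> count_path a b g t = count_path a b g' t"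
  unfolding count_path_def by (rule arg_cong[where f="\<lambda>x. a + int (card x)"]) auto

lemma le_iff_le_count_path:
  assumes "strict_column n a b g" "a < r" "r \<le> b"
  shows "g r \<le> t \<longleftrightarrow> r \<le> count_path a b g t"
proof
  assume le: "g r \<le> t"
  have "{a<..r} \<subseteq> {r'. a < r' \<and> r' \<le> b \<and> g r' \<le> t}"
  proof
    fix r' assume r': "r' \<in> {a<..r}"
    then have "g r' \<le> g r"
      using strict_column_less[OF assms(1), of r' r] assms(3) by (cases "r' = r") auto
    then show "r' \<in> {r'. a < r' \<and> r' \<le> b \<and> g r' \<le> t}" using r' le assms(3) by auto
  qed
  then have "card {a<..r} \<le> card {r'. a < r' \<and> r' \<le> b \<and> g r' \<le> t}"
    by (rule card_mono[OF finite_count_path_set])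
  then show "r \<le> count_path a b g t" using assms(2) by (simp add: count_path_def)
next
  assume le: "r \<le> count_path a b g t"
  show "g r \<le> t"
  proof (rule ccontr)
    assume "\<not> g r \<le> t"
    have "{r'. a < r' \<and> r' \<le> b \<and> g r' \<le> t} \<subseteq> {a<..<r}"
    proof
      fix r' assume r': "r' \<in> {r'. a < r' \<and> r' \<le> b \<and> g r' \<le> t}"
      then have "\<not> r \<le> r'"
        using strict_column_less[OF assms(1), of r r'] assms(2) \<open>\<not> g r \<le> t\<close>
        by (cases "r = r'") auto
      then show "r' \<in> {a<..<r}" using r' by auto
    qed
    then have "card {r'. a < r' \<and> r' \<le> b \<and> g r' \<le> t} \<le> card {a<..<r}"
      by (rule card_mono[rotated]) simp
    then show False using le assms(2) by (simp add: count_path_def)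
  qed
qed

lemma lattice_path_count_path:
  assumes "strict_column n a b g" "a \<le> b"
  shows "lattice_path n a b (count_path a b g)"
proof -
  have empty: "{r. a < r \<and> r \<le> b \<and> g r \<le> 0} = {}"
    using strict_column_range[OF assms(1)] by force
  have start: "count_path a b g 0 = a" unfolding count_path_def empty by simp
  have "{r. a < r \<and> r \<le> b \<and> g r \<le> n} = {a<..b}"
    using strict_column_range[OF assms(1)] by force
  then have stop: "count_path a b g n = b" using assms(2) by (simp add: count_path_def)
  have step: "count_path a b g (Suc t) \<le> count_path a b g t + 1" for t
  proof (rule ccontr)
    assume jump: "\<not> ?thesis"
    define r where "r = count_path a b g t + 1"
    have r: "a < r" "r + 1 \<le> b"
      using count_path_bounds[OF assms(2), of g t] count_path_bounds[OF assms(2), of g "Suc t"] jump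
      by (auto simp: r_def)
    have "g r \<le> Suc t" "g (r + 1) \<le> Suc t" "\<not> g r \<le> t"
      using le_iff_le_count_path[OF assms(1)] r jump by (auto simp: r_def)
    moreover have "g r < g (r + 1)" using strict_column_less[OF assms(1)] r by auto
    ultimately show False by simp
  qed
  show ?thesis unfolding lattice_path_def using start stop step count_path_mono by auto
qed

lemma lattice_path_mono:
  assumes "lattice_path n a b N" "t \<le> t'" "t' \<le> n"
  shows "N t \<le> N t'"
  using assms(2,3)
proof (induction t' rule: dec_induct)
  case (step k)
  then show ?case using assms(1) unfolding lattice_path_def by (auto intro: order_trans)
qed simp

lemma lattice_path_cong:
  "(\<And>t. t \<le> n \<Longrightarrow> N t = M t) \<Longrightarrow> lattice_path n a b N \<longleftrightarrow> lattice_path n a b M"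
  unfolding lattice_path_def by auto

lemma path_filling_cong: "(\<And>t. t < n \<Longrightarrow> N t = M t) \<Longrightarrow> path_filling n N r = path_filling n M r"
  unfolding path_filling_def by (rule arg_cong[where f=card]) auto

lemma path_filling_le_iff:
  assumes "lattice_path n a b N" "a < r" "r \<le> b" "t \<le> n"
  shows "path_filling n N r \<le> t \<longleftrightarrow> r \<le> N t"
proof
  assume "r \<le> N t"
  have "{t'. t' < n \<and> N t' < r} \<subseteq> {..<t}"
  proof
    fix t' assume "t' \<in> {t'. t' < n \<and> N t' < r}"
    then show "t' \<in> {..<t}"
      using lattice_path_mono[OF assms(1), of t t'] \<open>r \<le> N t\<close> by (cases "t \<le> t'") auto
  qed
  then show "path_filling n N r \<le> t"
    unfolding path_filling_def using card_mono[of "{..<t}"] by fastforce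
next
  assume le: "path_filling n N r \<le> t"
  show "r \<le> N t"
  proof (rule ccontr)
    assume "\<not> r \<le> N t"
    then have "t < n" using assms unfolding lattice_path_def by (cases "t = n") auto
    then have "{..t} \<subseteq> {t'. t' < n \<and> N t' < r}"
      using lattice_path_mono[OF assms(1), of _ t] \<open>\<not> r \<le> N t\<close> by fastforce
    then have "card {..t} \<le> path_filling n N r"
      unfolding path_filling_def by (rule card_mono[rotated]) simp
    then show False using le by simp
  qed
qed

lemma path_filling_le: "path_filling n N r \<le> n"
  unfolding path_filling_def using card_mono[of "{..<n}" "{t. t < n \<and> N t < r}"] by auto

lemma strict_column_path_filling:
  assumes "lattice_path n a b N"
  shows "strict_column n a b (path_filling n N)"
  unfolding strict_column_def
proof (intro conjI allI impI)
  fix r assume r: "a < r \<and> r \<le> b"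
  show "1 \<le> path_filling n N r"
    using path_filling_le_iff[OF assms, of r 0] r assms unfolding lattice_path_def by auto
  show "path_filling n N r \<le> n" by (rule path_filling_le)
next
  fix r r' assume r: "a < r" "r < r'" "r' \<le> b"
  define t where "t = path_filling n N r"
  have "1 \<le> t" using path_filling_le_iff[OF assms, of r 0] r assms
    unfolding lattice_path_def t_def by auto
  have "t \<le> n" unfolding t_def by (rule path_filling_le)
  have "\<not> path_filling n N r \<le> t - 1" using \<open>1 \<le> t\<close> by (simp add: t_def)
  then have "\<not> r \<le> N (t - 1)"
    using path_filling_le_iff[OF assms, of r "t - 1"] r \<open>t \<le> n\<close> by simp
  moreover have "N t \<le> N (t - 1) + 1"
    using assms \<open>1 \<le> t\<close> \<open>t \<le> n\<close> unfolding lattice_path_def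
    by (metis Suc_diff_1 Suc_le_lessD diff_less less_one)
  ultimately have "\<not> r' \<le> N t" using r by simp
  then show "path_filling n N r < path_filling n N r'"
    using path_filling_le_iff[OF assms, of r' t] r \<open>t \<le> n\<close> by (simp add: t_def)
qed

lemma count_path_path_filling:
  assumes "lattice_path n a b N" "t \<le> n"
  shows "count_path a b (path_filling n N) t = N t"
proof -
  have "a \<le> N t" "N t \<le> b"
    using lattice_path_mono[OF assms(1), of 0 t] lattice_path_mono[OF assms(1), of t n] assms
    unfolding lattice_path_def by auto
  moreover have "{r. a < r \<and> r \<le> b \<and> path_filling n N r \<le> t} = {a<..N t}"
    using path_filling_le_iff[OF assms(1) _ _ assms(2)] \<open>N t \<le> b\<close> by auto
  ultimately show ?thesis unfolding count_path_def by simp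
qed

lemma path_filling_count_path:
  assumes "strict_column n a b g" "a < r" "r \<le> b"
  shows "path_filling n (count_path a b g) r = g r"
proof -
  have "{t. t < n \<and> count_path a b g t < r} = {..<g r}"
  proof (intro set_eqI iffI)
    fix t assume "t \<in> {t. t < n \<and> count_path a b g t < r}"
    then show "t \<in> {..<g r}" using le_iff_le_count_path[OF assms, of t] by auto
  next
    fix t assume "t \<in> {..<g r}"
    then show "t \<in> {t. t < n \<and> count_path a b g t < r}"
      using le_iff_le_count_path[OF assms, of t] strict_column_range[OF assms] by auto
  qed
  then show ?thesis unfolding path_filling_def by simp
qed

lemma count_path_le_iff:
  assumes "strict_column n a b g" "strict_column n a b h"
  shows "(\<forall>r. a < r \<and> r \<le> b \<longrightarrow> h r \<le> g r) \<longleftrightarrow>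
    (\<forall>t\<le>n. count_path a b g t \<le> count_path a b h t)"
proof
  assume "\<forall>r. a < r \<and> r \<le> b \<longrightarrow> h r \<le> g r"
  then show "\<forall>t\<le>n. count_path a b g t \<le> count_path a b h t"
    unfolding count_path_def
    by (auto intro!: card_mono finite_count_path_set dest: order_trans)
next
  assume le: "\<forall>t\<le>n. count_path a b g t \<le> count_path a b h t"
  show "\<forall>r. a < r \<and> r \<le> b \<longrightarrow> h r \<le> g r"
  proof (intro allI impI)
    fix r assume r: "a < r \<and> r \<le> b"
    have "r \<le> count_path a b g (g r)" using le_iff_le_count_path[OF assms(1)] r by auto
    also have "\<dots> \<le> count_path a b h (g r)" using le strict_column_range[OF assms(1)] r by auto
    finally show "h r \<le> g r" using le_iff_le_count_path[OF assms(2)] r by auto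
  qed
qed

lemma count_path_step:
  assumes "g r0 = h r0 + 1" "h r0 = i" and same: "\<And>r. r \<noteq> r0 \<Longrightarrow> g r = h r"
    and "a < r0" "r0 \<le> b"
  shows "count_path a b h t = count_path a b g t + (if t = i then 1 else 0)"
proof (cases "t = i")
  case True
  have "{r. a < r \<and> r \<le> b \<and> h r \<le> t} = insert r0 {r. a < r \<and> r \<le> b \<and> g r \<le> t}"
  proof (intro set_eqI)
    fix r show "r \<in> {r. a < r \<and> r \<le> b \<and> h r \<le> t} \<longleftrightarrow> r \<in> insert r0 {r. a < r \<and> r \<le> b \<and> g r \<le> t}"
      using assms same[of r] True by (cases "r = r0") auto
  qed
  moreover have "r0 \<notin> {r. a < r \<and> r \<le> b \<and> g r \<le> t}" using assms True by auto
  ultimately show ?thesis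
    using True finite_count_path_set[of a b g t] by (simp add: count_path_def)
next
  case False
  have "{r. a < r \<and> r \<le> b \<and> h r \<le> t} = {r. a < r \<and> r \<le> b \<and> g r \<le> t}"
  proof (intro set_eqI)
    fix r show "r \<in> {r. a < r \<and> r \<le> b \<and> h r \<le> t} \<longleftrightarrow> r \<in> {r. a < r \<and> r \<le> b \<and> g r \<le> t}"
      using assms same[of r] False by (cases "r = r0") auto
  qed
  then show ?thesis using False by (simp add: count_path_def)
qed

lemma path_filling_step:
  assumes step: "\<forall>t\<le>n. M t = N t + (if t = i then 1 else 0)" and "i < n"
  shows "path_filling n M r = (if r = N i + 1 then path_filling n N r - 1 else path_filling n N r)"
proof -
  have "{t. t < n \<and> M t < r} = {t. t < n \<and> N t < r} - (if r = N i + 1 then {i} else {})"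
  proof (intro set_eqI)
    fix t show "t \<in> {t. t < n \<and> M t < r} \<longleftrightarrow>
      t \<in> {t. t < n \<and> N t < r} - (if r = N i + 1 then {i} else {})"
      using step[rule_format, of t] \<open>i < n\<close> by (cases "t = i") auto
  qed
  then show ?thesis using \<open>i < n\<close> by (simp add: path_filling_def)
qed

lemma count_path_step_iff:
  assumes g: "strict_column n a b g" and h: "strict_column n a b h" and "a \<le> b" "i < n"
  shows "(\<exists>r0. a < r0 \<and> r0 \<le> b \<and> g r0 = h r0 + 1 \<and> h r0 = i \<and>
            (\<forall>r. a < r \<and> r \<le> b \<and> r \<noteq> r0 \<longrightarrow> g r = h r))
     \<longleftrightarrow> (\<forall>t\<le>n. count_path a b h t = count_path a b g t + (if t = i then 1 else 0))"
proof
  assume "\<exists>r0. a < r0 \<and> r0 \<le> b \<and> g r0 = h r0 + 1 \<and> h r0 = i \<and>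
            (\<forall>r. a < r \<and> r \<le> b \<and> r \<noteq> r0 \<longrightarrow> g r = h r)"
  then obtain r0 where r0: "a < r0" "r0 \<le> b" "g r0 = h r0 + 1" "h r0 = i"
    and same: "\<forall>r. a < r \<and> r \<le> b \<and> r \<noteq> r0 \<longrightarrow> g r = h r" by blast
  have "count_path a b h t = count_path a b g t + (if t = i then 1 else 0)" for t
  proof -
    have "count_path a b g t = count_path a b (\<lambda>r. if r = r0 then g r else h r) t"
      using same by (intro count_path_cong) auto
    then show ?thesis using count_path_step[of "\<lambda>r. if r = r0 then g r else h r" r0 h i] r0
      by simp
  qed
  then show "\<forall>t\<le>n. count_path a b h t = count_path a b g t + (if t = i then 1 else 0)" by blast
next
  assume step: "\<forall>t\<le>n. count_path a b h t = count_path a b g t + (if t = i then 1 else 0)"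
  define r0 where "r0 = count_path a b g i + 1"
  have r0: "a < r0" "r0 \<le> b"
    using count_path_bounds[OF \<open>a \<le> b\<close>, of g i] count_path_bounds[OF \<open>a \<le> b\<close>, of h i] step \<open>i < n\<close>
    by (auto simp: r0_def)
  have filling: "h r = (if r = r0 then g r - 1 else g r)" if "a < r" "r \<le> b" for r
  proof -
    have "h r = path_filling n (count_path a b h) r"
      using path_filling_count_path[OF h that] by simp
    also have "\<dots> = (if r = r0 then path_filling n (count_path a b g) r - 1
                      else path_filling n (count_path a b g) r)"
      using path_filling_step[OF step \<open>i < n\<close>] by (simp add: r0_def)
    also have "\<dots> = (if r = r0 then g r - 1 else g r)"
      using path_filling_count_path[OF g that] by auto
    finally show ?thesis .
  qed
  have "h r0 \<le> i" using le_iff_le_count_path[OF h r0] step \<open>i < n\<close> by (simp add: r0_def)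
  moreover have "\<not> g r0 \<le> i" using le_iff_le_count_path[OF g r0] by (simp add: r0_def)
  ultimately have "g r0 = i + 1" "h r0 = i" using filling[OF r0] by auto
  then show "\<exists>r0. a < r0 \<and> r0 \<le> b \<and> g r0 = h r0 + 1 \<and> h r0 = i \<and>
            (\<forall>r. a < r \<and> r \<le> b \<and> r \<noteq> r0 \<longrightarrow> g r = h r)"
    using r0 filling by auto
qed

section \<open>Fillings of unions of columns\<close>

definition column_cells :: "int set \<Rightarrow> (int \<Rightarrow> int) \<Rightarrow> (int \<Rightarrow> int) \<Rightarrow> cell set" where
  "column_cells C a b = {(r, c). c \<in> C \<and> a c < r \<and> r \<le> b c}"

definition nested_columns :: "nat \<Rightarrow> int set \<Rightarrow> (int \<Rightarrow> int) \<Rightarrow> (int \<Rightarrow> int) \<Rightarrow> bool" where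
  "nested_columns n C a b \<longleftrightarrow> (\<forall>c\<in>C. a c \<le> b c \<and> b c \<le> a c + int n) \<and>
     (\<forall>c\<in>C. \<forall>c'\<in>C. c < c' \<longrightarrow> a c' \<le> a c \<and> b c' \<le> b c)"

definition column_path :: "(int \<Rightarrow> int) \<Rightarrow> (int \<Rightarrow> int) \<Rightarrow> filling \<Rightarrow> int \<Rightarrow> nat \<Rightarrow> int" where
  "column_path a b T c = count_path (a c) (b c) (\<lambda>r. T (r, c))"

text \<open>A family vanishes outside \<open>C \<times> {0..n}\<close>, so that it is determined by its paths.\<close>
definition path_families ::
    "nat \<Rightarrow> int set \<Rightarrow> (int \<Rightarrow> int) \<Rightarrow> (int \<Rightarrow> int) \<Rightarrow> (int \<Rightarrow> nat \<Rightarrow> int) set" where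
  "path_families n C a b = {N. (\<forall>c\<in>C. lattice_path n (a c) (b c) (N c)) \<and>
     (\<forall>c\<in>C. \<forall>c'\<in>C. c < c' \<longrightarrow> (\<forall>t\<le>n. N c' t \<le> N c t)) \<and>
     (\<forall>c t. c \<notin> C \<or> n < t \<longrightarrow> N c t = 0)}"

definition filling_of_paths ::
    "nat \<Rightarrow> int set \<Rightarrow> (int \<Rightarrow> int) \<Rightarrow> (int \<Rightarrow> int) \<Rightarrow> (int \<Rightarrow> nat \<Rightarrow> int) \<Rightarrow> filling" where
  "filling_of_paths n C a b N =
     (\<lambda>(r, c). if c \<in> C \<and> a c < r \<and> r \<le> b c then path_filling n (N c) r else 0)"

lemma nested_columns_le: "nested_columns n C a b \<Longrightarrow> c \<in> C \<Longrightarrow> a c \<le> b c"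
  and nested_columns_antimono:
    "nested_columns n C a b \<Longrightarrow> c \<in> C \<Longrightarrow> c' \<in> C \<Longrightarrow> c < c' \<Longrightarrow> a c' \<le> a c \<and> b c' \<le> b c"
  unfolding nested_columns_def by auto

lemma nested_columns_complement: "nested_columns n C a b \<Longrightarrow> nested_columns n C b (\<lambda>c. a c + int n)"
  unfolding nested_columns_def by auto

lemma ssyt_range: "T \<in> ssyt n D \<Longrightarrow> x \<in> D \<Longrightarrow> 1 \<le> T x \<and> T x \<le> n"
  unfolding ssyt_def by auto

lemma ssyt_outside: "T \<in> ssyt n D \<Longrightarrow> x \<notin> D \<Longrightarrow> T x = 0"
  unfolding ssyt_def by (cases x) auto

lemma ssyt_strict_column:
  "T \<in> ssyt n (column_cells C a b) \<Longrightarrow> c \<in> C \<Longrightarrow> strict_column n (a c) (b c) (\<lambda>r. T (r, c))"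
  unfolding ssyt_def strict_column_def column_cells_def by auto

lemma lattice_path_column_path:
  "nested_columns n C a b \<Longrightarrow> T \<in> ssyt n (column_cells C a b) \<Longrightarrow> c \<in> C \<Longrightarrow>
    lattice_path n (a c) (b c) (column_path a b T c)"
  unfolding column_path_def by (blast intro: lattice_path_count_path ssyt_strict_column nested_columns_le)

lemma column_path_antimono:
  assumes nested: "nested_columns n C a b" and T: "T \<in> ssyt n (column_cells C a b)"
    and c: "c \<in> C" "c' \<in> C" "c < c'"
  shows "column_path a b T c' t \<le> column_path a b T c t"
proof (rule ccontr)
  assume greater: "\<not> ?thesis"
  define r where "r = column_path a b T c' t"
  have "a c' \<le> a c" "b c' \<le> b c" using nested_columns_antimono[OF nested c] by auto
  moreover have "a c \<le> column_path a b T c t" "column_path a b T c' t \<le> b c'"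
    using count_path_bounds nested_columns_le[OF nested] c unfolding column_path_def by blast+
  ultimately have r: "a c' < r" "r \<le> b c'" "a c < r" "r \<le> b c"
    using greater by (auto simp: r_def)
  have "T (r, c') \<le> t"
    using le_iff_le_count_path[OF ssyt_strict_column[OF T c(2)] r(1,2)]
    by (simp add: r_def column_path_def)
  moreover have "\<not> T (r, c) \<le> t"
    using le_iff_le_count_path[OF ssyt_strict_column[OF T c(1)] r(3,4)] greater
    by (simp add: r_def column_path_def)
  moreover have "T (r, c) \<le> T (r, c')" using T r c unfolding ssyt_def column_cells_def by auto
  ultimately show False by simp
qed

lemma ssyt_le_iff_column_path_le:
  assumes "T \<in> ssyt n (column_cells C a b)" "S \<in> ssyt n (column_cells C a b)"
  shows "(\<forall>x\<in>column_cells C a b. S x \<le> T x) \<longleftrightarrow>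
    (\<forall>c\<in>C. \<forall>t\<le>n. column_path a b T c t \<le> column_path a b S c t)"
proof -
  have "(\<forall>x\<in>column_cells C a b. S x \<le> T x) \<longleftrightarrow>
      (\<forall>c\<in>C. \<forall>r. a c < r \<and> r \<le> b c \<longrightarrow> S (r, c) \<le> T (r, c))"
    unfolding column_cells_def by auto
  also have "\<dots> \<longleftrightarrow> (\<forall>c\<in>C. \<forall>t\<le>n. column_path a b T c t \<le> column_path a b S c t)"
    unfolding column_path_def
    using count_path_le_iff[OF ssyt_strict_column[OF assms(1)] ssyt_strict_column[OF assms(2)]] by auto
  finally show ?thesis .
qed

lemma ssyt_eq_if_column_path_eq:
  assumes "T \<in> ssyt n (column_cells C a b)" "S \<in> ssyt n (column_cells C a b)" "c \<in> C"
    and "\<forall>t\<le>n. column_path a b T c t = column_path a b S c t" "a c < r" "r \<le> b c"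
  shows "S (r, c) = T (r, c)"
proof -
  have "T (r, c) = path_filling n (column_path a b T c) r"
    using path_filling_count_path[OF ssyt_strict_column[OF assms(1,3)] assms(5,6)]
    by (simp add: column_path_def)
  also have "\<dots> = path_filling n (column_path a b S c) r"
    using assms(4) by (intro path_filling_cong) simp
  also have "\<dots> = S (r, c)"
    using path_filling_count_path[OF ssyt_strict_column[OF assms(2,3)] assms(5,6)]
    by (simp add: column_path_def)
  finally show ?thesis by simp
qed

lemma filling_of_paths_ssyt:
  assumes "N \<in> path_families n C a b"
  shows "filling_of_paths n C a b N \<in> ssyt n (column_cells C a b)"
proof -
  have path: "lattice_path n (a c) (b c) (N c)" if "c \<in> C" for c
    using assms that by (simp add: path_families_def)
  have nested: "N c' t \<le> N c t" if "c \<in> C" "c' \<in> C" "c < c'" "t \<le> n" for c c' t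
    using assms that by (simp add: path_families_def)
  show ?thesis
    unfolding ssyt_def
  proof (intro CollectI conjI allI ballI impI)
    fix x assume "x \<in> column_cells C a b"
    then show "1 \<le> filling_of_paths n C a b N x" "filling_of_paths n C a b N x \<le> n"
      using strict_column_path_filling[OF path]
      by (auto simp: column_cells_def filling_of_paths_def strict_column_def)
  next
    fix x assume "x \<notin> column_cells C a b"
    then show "filling_of_paths n C a b N x = 0"
      by (auto simp: column_cells_def filling_of_paths_def split: prod.splits)
  next
    fix r c c' assume "(r, c) \<in> column_cells C a b" "(r, c') \<in> column_cells C a b" "c < c'"
    then have cells: "c \<in> C" "a c < r" "r \<le> b c" "c' \<in> C" "a c' < r" "r \<le> b c'"
      by (auto simp: column_cells_def)
    define t where "t = path_filling n (N c') r"
    have "t \<le> n" unfolding t_def by (rule path_filling_le)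
    have "r \<le> N c' t"
      using path_filling_le_iff[OF path[OF cells(4)] cells(5,6) \<open>t \<le> n\<close>] by (simp add: t_def)
    also have "\<dots> \<le> N c t" using nested cells \<open>c < c'\<close> \<open>t \<le> n\<close> by blast
    finally have "path_filling n (N c) r \<le> t"
      using path_filling_le_iff[OF path[OF cells(1)] cells(2,3) \<open>t \<le> n\<close>] by simp
    then show "filling_of_paths n C a b N (r, c) \<le> filling_of_paths n C a b N (r, c')"
      using cells by (simp add: filling_of_paths_def t_def)
  next
    fix r r' c assume "(r, c) \<in> column_cells C a b" "(r', c) \<in> column_cells C a b" "r < r'"
    then show "filling_of_paths n C a b N (r, c) < filling_of_paths n C a b N (r', c)"
      using strict_column_path_filling[OF path]
      by (auto simp: column_cells_def filling_of_paths_def strict_column_def)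
  qed
qed

lemma column_path_filling_of_paths:
  assumes "N \<in> path_families n C a b" "c \<in> C" "t \<le> n"
  shows "column_path a b (filling_of_paths n C a b N) c t = N c t"
proof -
  have "column_path a b (filling_of_paths n C a b N) c t = count_path (a c) (b c) (path_filling n (N c)) t"
    unfolding column_path_def by (rule count_path_cong) (simp add: filling_of_paths_def assms(2))
  also have "\<dots> = N c t"
    using assms by (intro count_path_path_filling) (auto simp: path_families_def)
  finally show ?thesis .
qed

lemma filling_of_paths_column_path:
  assumes T: "T \<in> ssyt n (column_cells C a b)"
    and N: "\<forall>c\<in>C. \<forall>t\<le>n. N c t = column_path a b T c t"
  shows "filling_of_paths n C a b N = T"
proof
  fix x :: cell
  obtain r c where x: "x = (r, c)" by force
  show "filling_of_paths n C a b N x = T x"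
  proof (cases "c \<in> C \<and> a c < r \<and> r \<le> b c")
    case True
    then have "filling_of_paths n C a b N x = path_filling n (column_path a b T c) r"
      using N x by (auto simp: filling_of_paths_def intro: path_filling_cong)
    also have "\<dots> = T x"
      using path_filling_count_path[OF ssyt_strict_column[OF T] ] True x
      by (simp add: column_path_def)
    finally show ?thesis .
  next
    case False
    then show ?thesis
      using ssyt_outside[OF T, of x] x by (auto simp: filling_of_paths_def column_cells_def)
  qed
qed

lemma column_path_step_if_cell_step:
  assumes nested: "nested_columns n C a b"
    and S: "S \<in> ssyt n (column_cells C a b)" and T: "T \<in> ssyt n (column_cells C a b)" and "i < n"
    and cell: "(r0, c0) \<in> column_cells C a b"
    and step: "S (r0, c0) = T (r0, c0) + 1" "T (r0, c0) = i" and same: "\<forall>y. y \<noteq> (r0, c0) \<longrightarrow> S y = T y"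
  shows "\<forall>c\<in>C. \<forall>t\<le>n.
    column_path a b T c t = column_path a b S c t + (if c = c0 \<and> t = i then 1 else 0)"
proof -
  have c0: "c0 \<in> C" and r0: "a c0 < r0" "r0 \<le> b c0" using cell by (auto simp: column_cells_def)
  have "\<forall>t\<le>n. column_path a b T c0 t = column_path a b S c0 t + (if t = i then 1 else 0)"
    using count_path_step_iff[OF ssyt_strict_column[OF S c0] ssyt_strict_column[OF T c0]
        nested_columns_le[OF nested c0] \<open>i < n\<close>] r0 step same
    unfolding column_path_def by blast
  moreover have "column_path a b T c t = column_path a b S c t" if "c \<noteq> c0" for c t
    unfolding column_path_def by (rule count_path_cong) (use same that in auto)
  ultimately show ?thesis by (metis add_0_right)
qed

lemma cell_step_if_column_path_step:
  assumes nested: "nested_columns n C a b"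
    and S: "S \<in> ssyt n (column_cells C a b)" and T: "T \<in> ssyt n (column_cells C a b)" and "i < n"
    and c0: "c0 \<in> C" and step: "\<forall>c\<in>C. \<forall>t\<le>n.
      column_path a b T c t = column_path a b S c t + (if c = c0 \<and> t = i then 1 else 0)"
  shows "\<exists>x\<in>column_cells C a b. S x = T x + 1 \<and> T x = i \<and> (\<forall>y. y \<noteq> x \<longrightarrow> S y = T y)"
proof -
  have "\<forall>t\<le>n. count_path (a c0) (b c0) (\<lambda>r. T (r, c0)) t =
      count_path (a c0) (b c0) (\<lambda>r. S (r, c0)) t + (if t = i then 1 else 0)"
    using step c0 unfolding column_path_def by auto
  then obtain r0 where r0: "a c0 < r0" "r0 \<le> b c0" "S (r0, c0) = T (r0, c0) + 1" "T (r0, c0) = i"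
    and column_same: "\<forall>r. a c0 < r \<and> r \<le> b c0 \<and> r \<noteq> r0 \<longrightarrow> S (r, c0) = T (r, c0)"
    using count_path_step_iff[OF ssyt_strict_column[OF S c0] ssyt_strict_column[OF T c0]
        nested_columns_le[OF nested c0] \<open>i < n\<close>] by blast
  have "S (r, c) = T (r, c)" if "(r, c) \<noteq> (r0, c0)" for r c
  proof (cases "(r, c) \<in> column_cells C a b")
    case False
    then show ?thesis using ssyt_outside[OF S] ssyt_outside[OF T] by simp
  next
    case True
    then have cell: "c \<in> C" "a c < r" "r \<le> b c" by (auto simp: column_cells_def)
    then show ?thesis
      using column_same that ssyt_eq_if_column_path_eq[OF T S cell(1) _ cell(2,3)] step
      by (cases "c = c0") auto
  qed
  then show ?thesis using r0 c0
    by (intro bexI[of _ "(r0, c0)"]) (auto simp: column_cells_def)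
qed

lemma ssyt_edge_iff_column_path_step:
  assumes "nested_columns n C a b"
    and "S \<in> ssyt n (column_cells C a b)" "T \<in> ssyt n (column_cells C a b)" "i < n"
  shows "(\<exists>x\<in>column_cells C a b. S x = T x + 1 \<and> T x = i \<and> (\<forall>y. y \<noteq> x \<longrightarrow> S y = T y))
    \<longleftrightarrow> (\<exists>c\<in>C. \<forall>c'\<in>C. \<forall>t\<le>n.
          column_path a b T c' t = column_path a b S c' t + (if c' = c \<and> t = i then 1 else 0))"
    (is "?cell_step \<longleftrightarrow> ?path_step")
proof
  assume ?cell_step
  then obtain r0 c0 where cell: "(r0, c0) \<in> column_cells C a b"
    and "S (r0, c0) = T (r0, c0) + 1" "T (r0, c0) = i" "\<forall>y. y \<noteq> (r0, c0) \<longrightarrow> S y = T y"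
    by auto
  moreover have "c0 \<in> C" using cell by (simp add: column_cells_def)
  ultimately show ?path_step using column_path_step_if_cell_step[OF assms] by blast
next
  assume ?path_step
  then show ?cell_step using cell_step_if_column_path_step[OF assms] by blast
qed

lemma cposet_isoI:
  assumes "\<And>x. x \<in> carrier R \<Longrightarrow> f x \<in> carrier S" "\<And>y. y \<in> carrier S \<Longrightarrow> g y \<in> carrier R"
    and "\<And>x. x \<in> carrier R \<Longrightarrow> g (f x) = x" "\<And>y. y \<in> carrier S \<Longrightarrow> f (g y) = y"
    and "\<And>x y. x \<in> carrier R \<Longrightarrow> y \<in> carrier R \<Longrightarrow> le R x y \<longleftrightarrow> le S (f x) (f y)"
    and "\<And>x y i. x \<in> carrier R \<Longrightarrow> y \<in> carrier R \<Longrightarrow> edge R x i y \<longleftrightarrow> edge S (f x) i (f y)"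
  shows "cposet_iso R S"
  unfolding cposet_iso_def
  using assms by (intro exI[of _ f] conjI bij_betw_byWitness[where f'=g]) auto

lemma cposet_iso_refl: "cposet_iso R R"
  by (rule cposet_isoI[where f=id and g=id]) auto

lemma cposet_iso_sym:
  assumes "cposet_iso R S" shows "cposet_iso S R"
proof -
  obtain f where f: "bij_betw f (carrier R) (carrier S)"
    and le: "\<forall>x\<in>carrier R. \<forall>y\<in>carrier R. le R x y \<longleftrightarrow> le S (f x) (f y)"
    and edge: "\<forall>x\<in>carrier R. \<forall>y\<in>carrier R. \<forall>i. edge R x i y \<longleftrightarrow> edge S (f x) i (f y)"
    using assms unfolding cposet_iso_def by blast
  define g where "g = inv_into (carrier R) f"
  have g: "g y \<in> carrier R" "f (g y) = y" if "y \<in> carrier S" for y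
    using that f unfolding g_def by (auto intro: inv_into_into f_inv_into_f simp: bij_betw_def)
  show ?thesis
  proof (rule cposet_isoI[where f=g and g=f])
    show "g (f x) = x" if "x \<in> carrier R" for x
      using that f unfolding g_def by (simp add: bij_betw_def)
  qed (use f g le edge in \<open>auto simp: bij_betw_def\<close>)
qed

lemma cposet_iso_trans [trans]:
  assumes "cposet_iso R S" "cposet_iso S U" shows "cposet_iso R U"
proof -
  obtain f where f: "bij_betw f (carrier R) (carrier S)"
    "\<forall>x\<in>carrier R. \<forall>y\<in>carrier R. le R x y \<longleftrightarrow> le S (f x) (f y)"
    "\<forall>x\<in>carrier R. \<forall>y\<in>carrier R. \<forall>i. edge R x i y \<longleftrightarrow> edge S (f x) i (f y)"
    using assms(1) unfolding cposet_iso_def by blast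
  obtain g where g: "bij_betw g (carrier S) (carrier U)"
    "\<forall>x\<in>carrier S. \<forall>y\<in>carrier S. le S x y \<longleftrightarrow> le U (g x) (g y)"
    "\<forall>x\<in>carrier S. \<forall>y\<in>carrier S. \<forall>i. edge S x i y \<longleftrightarrow> edge U (g x) i (g y)"
    using assms(2) unfolding cposet_iso_def by blast
  have "f x \<in> carrier S" if "x \<in> carrier R" for x using bij_betwE[OF f(1)] that by blast
  then show ?thesis unfolding cposet_iso_def
    using bij_betw_trans[OF f(1) g(1)] f(2,3) g(2,3) by (intro exI[of _ "g \<circ> f"]) simp
qed

lemma cposet_iso_poset_sigma0: "cposet_iso R S \<Longrightarrow> cposet_iso (poset_sigma0 n R) (poset_sigma0 n S)"
  unfolding cposet_iso_def poset_sigma0_def by (elim exE, rule_tac x=f in exI) simp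

lemma cposet_iso_poset_dual: "cposet_iso R S \<Longrightarrow> cposet_iso (poset_dual R) (poset_dual S)"
  unfolding cposet_iso_def poset_dual_def by (elim exE, rule_tac x=f in exI) simp

lemma poset_sigma0_involutive:
  assumes "\<And>x y i. edge R x i y \<Longrightarrow> 1 \<le> i \<and> i < n"
  shows "cposet_iso (poset_sigma0 n (poset_sigma0 n R)) R"
proof (rule cposet_isoI[where f=id and g=id])
  fix x y i
  show "edge (poset_sigma0 n (poset_sigma0 n R)) x i y \<longleftrightarrow> edge R (id x) i (id y)"
    using assms[of x i y] by (auto simp: poset_sigma0_def)
qed (simp_all add: poset_sigma0_def)

lemma L_skew_edge_color: "edge (L_skew n D) S i T \<Longrightarrow> 1 \<le> i \<and> i < n"
  unfolding L_skew_def ssyt_def by auto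

section \<open>The poset of nested lattice paths\<close>

definition path_poset ::
    "nat \<Rightarrow> int set \<Rightarrow> (int \<Rightarrow> int) \<Rightarrow> (int \<Rightarrow> int) \<Rightarrow> (int \<Rightarrow> nat \<Rightarrow> int) cposet" where
  "path_poset n C a b = \<lparr>carrier = path_families n C a b,
     le = (\<lambda>N M. \<forall>c\<in>C. \<forall>t\<le>n. N c t \<le> M c t),
     edge = (\<lambda>N i M. 1 \<le> i \<and> i < n \<and>
       (\<exists>c\<in>C. \<forall>c'\<in>C. \<forall>t\<le>n. M c' t = N c' t + (if c' = c \<and> t = i then 1 else 0)))\<rparr>"

definition column_paths ::
    "nat \<Rightarrow> int set \<Rightarrow> (int \<Rightarrow> int) \<Rightarrow> (int \<Rightarrow> int) \<Rightarrow> filling \<Rightarrow> int \<Rightarrow> nat \<Rightarrow> int" where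
  "column_paths n C a b T = (\<lambda>c t. if c \<in> C \<and> t \<le> n then column_path a b T c t else 0)"

lemma column_paths_path_families:
  "nested_columns n C a b \<Longrightarrow> T \<in> ssyt n (column_cells C a b) \<Longrightarrow>
    column_paths n C a b T \<in> path_families n C a b"
  unfolding path_families_def column_paths_def
  by (auto intro: column_path_antimono lattice_path_column_path[THEN lattice_path_cong[THEN iffD1, rotated]])

theorem L_skew_iso_path_poset:
  assumes nested: "nested_columns n C a b"
  shows "cposet_iso (L_skew n (column_cells C a b)) (path_poset n C a b)"
proof (rule cposet_isoI[where f="column_paths n C a b" and g="filling_of_paths n C a b"])
  fix T assume "T \<in> carrier (L_skew n (column_cells C a b))"
  then have T: "T \<in> ssyt n (column_cells C a b)" by (simp add: L_skew_def)
  show "column_paths n C a b T \<in> carrier (path_poset n C a b)"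
    using column_paths_path_families[OF nested T] by (simp add: path_poset_def)
  show "filling_of_paths n C a b (column_paths n C a b T) = T"
    using T by (rule filling_of_paths_column_path) (simp add: column_paths_def)
next
  fix N assume "N \<in> carrier (path_poset n C a b)"
  then have N: "N \<in> path_families n C a b" by (simp add: path_poset_def)
  then show "filling_of_paths n C a b N \<in> carrier (L_skew n (column_cells C a b))"
    by (simp add: L_skew_def filling_of_paths_ssyt)
  show "column_paths n C a b (filling_of_paths n C a b N) = N"
    using N column_path_filling_of_paths[OF N]
    by (auto simp: column_paths_def path_families_def not_le intro!: ext)
next
  fix S T assume "S \<in> carrier (L_skew n (column_cells C a b))" "T \<in> carrier (L_skew n (column_cells C a b))"
  then have S: "S \<in> ssyt n (column_cells C a b)" and T: "T \<in> ssyt n (column_cells C a b)"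
    by (simp_all add: L_skew_def)
  show "le (L_skew n (column_cells C a b)) S T \<longleftrightarrow>
      le (path_poset n C a b) (column_paths n C a b S) (column_paths n C a b T)"
    using ssyt_le_iff_column_path_le[OF S T] by (simp add: L_skew_def path_poset_def column_paths_def)
  fix i
  show "edge (L_skew n (column_cells C a b)) S i T \<longleftrightarrow>
      edge (path_poset n C a b) (column_paths n C a b S) i (column_paths n C a b T)"
  proof (cases "1 \<le> i \<and> i < n")
    case True
    then show ?thesis
      using ssyt_edge_iff_column_path_step[OF nested S T, of i] S T
      by (simp add: L_skew_def path_poset_def column_paths_def)
  next
    case False
    then show ?thesis using L_skew_edge_color by (auto simp: path_poset_def)
  qed
qed

definition reflect_paths ::
    "nat \<Rightarrow> int set \<Rightarrow> int \<Rightarrow> (int \<Rightarrow> nat \<Rightarrow> int) \<Rightarrow> int \<Rightarrow> nat \<Rightarrow> int" where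
  "reflect_paths n C k N = (\<lambda>c t. if c \<in> C \<and> t \<le> n then N c (n - t) + int t + k else 0)"

lemma lattice_path_reflect:
  assumes "lattice_path n a b N"
  shows "lattice_path n (b + k) (a + int n + k) (\<lambda>t. N (n - t) + int t + k)"
  unfolding lattice_path_def
proof (intro conjI allI impI)
  show "N (n - 0) + int 0 + k = b + k" "N (n - n) + int n + k = a + int n + k"
    using assms by (simp_all add: lattice_path_def)
next
  fix t assume "t < n"
  then have "n - t = Suc (n - Suc t)" "n - Suc t < n" by auto
  then show "N (n - t) + int t + k \<le> N (n - Suc t) + int (Suc t) + k"
    "N (n - Suc t) + int (Suc t) + k \<le> N (n - t) + int t + k + 1"
    using assms unfolding lattice_path_def by auto
qed

lemma reflect_paths_path_families:
  assumes "N \<in> path_families n C a b"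
  shows "reflect_paths n C k N \<in> path_families n C (\<lambda>c. b c + k) (\<lambda>c. a c + int n + k)"
proof -
  have "lattice_path n (b c + k) (a c + int n + k) (reflect_paths n C k N c)" if "c \<in> C" for c
    using lattice_path_reflect[of n "a c" "b c" "N c" k] assms that
    by (subst lattice_path_cong[where M="\<lambda>t. N c (n - t) + int t + k"])
      (auto simp: reflect_paths_def path_families_def)
  then show ?thesis using assms by (auto simp: path_families_def reflect_paths_def)
qed

lemma all_atMost_reflect: "(\<forall>t\<le>n. P (n - t)) \<longleftrightarrow> (\<forall>t\<le>(n::nat). P t)"
  by (metis diff_diff_cancel diff_le_self)

theorem path_poset_reflect_iso:
  "cposet_iso (path_poset n C b (\<lambda>c. a c + int n)) (poset_sigma0 n (path_poset n C a b))"
proof (rule cposet_isoI[where f="reflect_paths n C (- int n)" and g="reflect_paths n C 0"])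
  fix N assume "N \<in> carrier (path_poset n C b (\<lambda>c. a c + int n))"
  then have N: "N \<in> path_families n C b (\<lambda>c. a c + int n)" by (simp add: path_poset_def)
  show "reflect_paths n C (- int n) N \<in> carrier (poset_sigma0 n (path_poset n C a b))"
    using reflect_paths_path_families[OF N, of "- int n"]
    by (simp add: path_poset_def poset_sigma0_def)
  show "reflect_paths n C 0 (reflect_paths n C (- int n) N) = N"
    using N by (auto simp: reflect_paths_def path_families_def not_le intro!: ext)
next
  fix N assume "N \<in> carrier (poset_sigma0 n (path_poset n C a b))"
  then have N: "N \<in> path_families n C a b" by (simp add: path_poset_def poset_sigma0_def)
  show "reflect_paths n C 0 N \<in> carrier (path_poset n C b (\<lambda>c. a c + int n))"
    using reflect_paths_path_families[OF N, of 0] by (simp add: path_poset_def)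
  show "reflect_paths n C (- int n) (reflect_paths n C 0 N) = N"
    using N by (auto simp: reflect_paths_def path_families_def not_le intro!: ext)
next
  fix N M i
  let ?f = "reflect_paths n C (- int n)"
  show "le (path_poset n C b (\<lambda>c. a c + int n)) N M \<longleftrightarrow>
      le (poset_sigma0 n (path_poset n C a b)) (?f N) (?f M)"
    using all_atMost_reflect[of n "\<lambda>t. N c t \<le> M c t" for c]
    by (auto simp: path_poset_def poset_sigma0_def reflect_paths_def)
  have step_reflect: "(\<forall>t\<le>n. ?f M c' t = ?f N c' t + (if c' = c \<and> t = n - i then 1 else 0)) \<longleftrightarrow>
      (\<forall>t\<le>n. M c' t = N c' t + (if c' = c \<and> t = i then 1 else 0))" if "c' \<in> C" "i < n" for c c'
  proof -
    have pointwise: "?f M c' (n - t) = ?f N c' (n - t) + (if c' = c \<and> n - t = n - i then 1 else 0)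
        \<longleftrightarrow> M c' t = N c' t + (if c' = c \<and> t = i then 1 else 0)" if "t \<le> n" for t
      using \<open>c' \<in> C\<close> \<open>i < n\<close> that by (auto simp: reflect_paths_def)
    show ?thesis
      unfolding all_atMost_reflect[symmetric, where P="\<lambda>t. ?f M c' t = ?f N c' t + (if c' = c \<and> t = n - i then 1 else 0)"]
      by (simp add: pointwise)
  qed
  show "edge (path_poset n C b (\<lambda>c. a c + int n)) N i M \<longleftrightarrow>
      edge (poset_sigma0 n (path_poset n C a b)) (?f N) i (?f M)"
  proof (cases "1 \<le> i \<and> i < n")
    case True
    then have "1 \<le> n - i" by auto
    then show ?thesis using True step_reflect by (simp add: path_poset_def poset_sigma0_def)
  qed (auto simp: path_poset_def poset_sigma0_def)
qed

theorem L_skew_column_complement_iso: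
  assumes nested: "nested_columns n C a b"
  shows "cposet_iso (L_skew n (column_cells C b (\<lambda>c. a c + int n)))
                    (poset_sigma0 n (L_skew n (column_cells C a b)))"
proof -
  have "cposet_iso (L_skew n (column_cells C b (\<lambda>c. a c + int n))) (path_poset n C b (\<lambda>c. a c + int n))"
    using nested_columns_complement[OF nested] by (rule L_skew_iso_path_poset)
  also have "cposet_iso \<dots> (poset_sigma0 n (path_poset n C a b))"
    by (rule path_poset_reflect_iso)
  also have "cposet_iso \<dots> (poset_sigma0 n (L_skew n (column_cells C a b)))"
    using L_skew_iso_path_poset[OF nested] by (rule cposet_iso_poset_sigma0[OF cposet_iso_sym])
  finally show ?thesis .
qed

section \<open>Rotation by 180 degrees\<close>

definition rotate_cell :: "cell \<Rightarrow> cell" where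
  "rotate_cell = (\<lambda>(r, c). (- r, - c))"

definition rotate_filling :: "nat \<Rightarrow> cell set \<Rightarrow> filling \<Rightarrow> filling" where
  "rotate_filling n D T = (\<lambda>x. if x \<in> D then n + 1 - T (rotate_cell x) else 0)"

lemma rotate_cell_rotate_cell [simp]: "rotate_cell (rotate_cell x) = x"
  unfolding rotate_cell_def by (cases x) auto

lemma rotate_cell_Pair [simp]: "rotate_cell (r, c) = (- r, - c)"
  by (simp add: rotate_cell_def)

lemma mem_rot180_iff: "x \<in> rot180 D \<longleftrightarrow> rotate_cell x \<in> D"
  unfolding rot180_def rotate_cell_def by (cases x) force

lemma rot180_rot180 [simp]: "rot180 (rot180 D) = D"
  by (auto simp: mem_rot180_iff)

lemma rotate_filling_ssyt:
  assumes T: "T \<in> ssyt n (rot180 D)"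
  shows "rotate_filling n D T \<in> ssyt n D"
  unfolding ssyt_def
proof (intro CollectI conjI allI ballI impI)
  fix x assume "x \<in> D"
  then have "1 \<le> T (rotate_cell x) \<and> T (rotate_cell x) \<le> n"
    by (intro ssyt_range[OF T]) (simp add: mem_rot180_iff)
  then show "1 \<le> rotate_filling n D T x" "rotate_filling n D T x \<le> n"
    using \<open>x \<in> D\<close> by (auto simp: rotate_filling_def)
next
  fix x assume "x \<notin> D" then show "rotate_filling n D T x = 0" by (simp add: rotate_filling_def)
next
  fix r c c' assume cells: "(r, c) \<in> D" "(r, c') \<in> D" "c < c'"
  then have "T (- r, - c') \<le> T (- r, - c)"
    using T unfolding ssyt_def by (auto simp: mem_rot180_iff)
  then show "rotate_filling n D T (r, c) \<le> rotate_filling n D T (r, c')"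
    using cells by (simp add: rotate_filling_def)
next
  fix r r' c assume cells: "(r, c) \<in> D" "(r', c) \<in> D" "r < r'"
  then have "T (- r', - c) < T (- r, - c)" "T (- r, - c) \<le> n"
    using T ssyt_range[OF T, of "(- r, - c)"] unfolding ssyt_def by (auto simp: mem_rot180_iff)
  then show "rotate_filling n D T (r, c) < rotate_filling n D T (r', c)"
    using cells by (simp add: rotate_filling_def)
qed

lemma rotate_filling_rotate_filling:
  assumes T: "T \<in> ssyt n (rot180 D)"
  shows "rotate_filling n (rot180 D) (rotate_filling n D T) = T"
proof
  fix y show "rotate_filling n (rot180 D) (rotate_filling n D T) y = T y"
    using ssyt_range[OF T, of y] ssyt_outside[OF T, of y]
    by (cases "y \<in> rot180 D") (auto simp: rotate_filling_def mem_rot180_iff)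
qed

lemma rotate_filling_le_iff:
  assumes S: "S \<in> ssyt n (rot180 D)" and T: "T \<in> ssyt n (rot180 D)"
  shows "(\<forall>y\<in>rot180 D. T y \<le> S y) \<longleftrightarrow>
    (\<forall>x\<in>D. rotate_filling n D S x \<le> rotate_filling n D T x)"
proof -
  have "(\<forall>y\<in>rot180 D. T y \<le> S y) \<longleftrightarrow> (\<forall>x\<in>D. T (rotate_cell x) \<le> S (rotate_cell x))"
    by (metis mem_rot180_iff rotate_cell_rotate_cell)
  also have "\<dots> \<longleftrightarrow> (\<forall>x\<in>D. rotate_filling n D S x \<le> rotate_filling n D T x)"
  proof (intro ball_cong refl)
    fix x assume "x \<in> D"
    then have "rotate_cell x \<in> rot180 D" by (simp add: mem_rot180_iff)
    then have "1 \<le> S (rotate_cell x)" "S (rotate_cell x) \<le> n" "1 \<le> T (rotate_cell x)" "T (rotate_cell x) \<le> n"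
      using ssyt_range[OF S] ssyt_range[OF T] by blast+
    moreover have "rotate_filling n D S x = n + 1 - S (rotate_cell x)"
      "rotate_filling n D T x = n + 1 - T (rotate_cell x)"
      using \<open>x \<in> D\<close> by (simp_all add: rotate_filling_def)
    ultimately show "T (rotate_cell x) \<le> S (rotate_cell x) \<longleftrightarrow>
        rotate_filling n D S x \<le> rotate_filling n D T x"
      by arith
  qed
  finally show ?thesis .
qed

lemma rotate_filling_edge_iff:
  assumes S: "S \<in> ssyt n (rot180 D)" and T: "T \<in> ssyt n (rot180 D)"
  shows "(\<exists>y\<in>rot180 D. S y = T y + 1 \<and> T y = i \<and> (\<forall>z. z \<noteq> y \<longrightarrow> S z = T z)) \<longleftrightarrow>
    1 \<le> i \<and> i < n \<and> (\<exists>x\<in>D. rotate_filling n D T x = rotate_filling n D S x + 1 \<and>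
      rotate_filling n D S x = n - i \<and> (\<forall>z. z \<noteq> x \<longrightarrow> rotate_filling n D T z = rotate_filling n D S z))"
    (is "?lhs \<longleftrightarrow> ?rhs")
proof
  assume ?lhs
  then obtain y where y: "y \<in> rot180 D" "S y = T y + 1" "T y = i"
    and same: "\<forall>z. z \<noteq> y \<longrightarrow> S z = T z" by blast
  have "rotate_filling n D T z = rotate_filling n D S z" if "z \<noteq> rotate_cell y" for z
  proof -
    have "rotate_cell z \<noteq> y" using that by (metis rotate_cell_rotate_cell)
    then show ?thesis using same[rule_format, of "rotate_cell z"] by (simp add: rotate_filling_def)
  qed
  moreover have "1 \<le> i" "i < n" using ssyt_range[OF S y(1)] ssyt_range[OF T y(1)] y by auto
  moreover have x: "rotate_cell y \<in> D" using y(1) by (simp add: mem_rot180_iff)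
  moreover have "rotate_filling n D T (rotate_cell y) = n + 1 - T y"
    "rotate_filling n D S (rotate_cell y) = n + 1 - S y"
    using x by (simp_all add: rotate_filling_def)
  ultimately show ?rhs using y by (intro conjI bexI[of _ "rotate_cell y"] allI impI) simp_all
next
  assume ?rhs
  then obtain x where i: "1 \<le> i" "i < n" and x: "x \<in> D"
    and step: "rotate_filling n D T x = rotate_filling n D S x + 1" "rotate_filling n D S x = n - i"
    and same: "\<forall>z. z \<noteq> x \<longrightarrow> rotate_filling n D T z = rotate_filling n D S z" by blast
  have y: "rotate_cell x \<in> rot180 D" using x by (simp add: mem_rot180_iff)
  have "rotate_filling n D T x = n + 1 - T (rotate_cell x)"
    "rotate_filling n D S x = n + 1 - S (rotate_cell x)"
    using x by (simp_all add: rotate_filling_def)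
  then have "S (rotate_cell x) = i + 1" "T (rotate_cell x) = i"
    using step i ssyt_range[OF S y] ssyt_range[OF T y] by auto
  moreover have "S z = T z" if "z \<noteq> rotate_cell x" for z
  proof (cases "z \<in> rot180 D")
    case True
    moreover have "rotate_cell z \<noteq> x" using that by (metis rotate_cell_rotate_cell)
    ultimately have "n + 1 - T z = n + 1 - S z"
      using same[rule_format, of "rotate_cell z"] by (simp add: rotate_filling_def mem_rot180_iff)
    then show ?thesis using ssyt_range[OF S True] ssyt_range[OF T True] by linarith
  next
    case False
    then show ?thesis using ssyt_outside[OF S False] ssyt_outside[OF T False] by simp
  qed
  ultimately show ?lhs using y by (intro bexI[of _ "rotate_cell x"] conjI allI impI) simp_all
qed

theorem L_skew_rot180_iso:
  "cposet_iso (L_skew n (rot180 D)) (poset_dual (poset_sigma0 n (L_skew n D)))"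
proof (rule cposet_isoI[where f="rotate_filling n D" and g="rotate_filling n (rot180 D)"])
  fix T assume "T \<in> carrier (L_skew n (rot180 D))"
  then have T: "T \<in> ssyt n (rot180 D)" by (simp add: L_skew_def)
  then show "rotate_filling n D T \<in> carrier (poset_dual (poset_sigma0 n (L_skew n D)))"
    by (simp add: rotate_filling_ssyt L_skew_def poset_dual_def poset_sigma0_def)
  show "rotate_filling n (rot180 D) (rotate_filling n D T) = T"
    using T by (rule rotate_filling_rotate_filling)
next
  fix T assume "T \<in> carrier (poset_dual (poset_sigma0 n (L_skew n D)))"
  then have T: "T \<in> ssyt n (rot180 (rot180 D))"
    by (simp add: L_skew_def poset_dual_def poset_sigma0_def)
  show "rotate_filling n (rot180 D) T \<in> carrier (L_skew n (rot180 D))"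
    using rotate_filling_ssyt[OF T] by (simp add: L_skew_def)
  show "rotate_filling n D (rotate_filling n (rot180 D) T) = T"
    using rotate_filling_rotate_filling[OF T] by simp
next
  fix S T assume "S \<in> carrier (L_skew n (rot180 D))" "T \<in> carrier (L_skew n (rot180 D))"
  then have S: "S \<in> ssyt n (rot180 D)" and T: "T \<in> ssyt n (rot180 D)" by (simp_all add: L_skew_def)
  show "le (L_skew n (rot180 D)) S T \<longleftrightarrow>
      le (poset_dual (poset_sigma0 n (L_skew n D))) (rotate_filling n D S) (rotate_filling n D T)"
    using rotate_filling_le_iff[OF S T] by (simp add: L_skew_def poset_dual_def poset_sigma0_def)
  fix i
  show "edge (L_skew n (rot180 D)) S i T \<longleftrightarrow>
      edge (poset_dual (poset_sigma0 n (L_skew n D))) (rotate_filling n D S) i (rotate_filling n D T)"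
    using rotate_filling_edge_iff[OF S T, of i] S T rotate_filling_ssyt[OF S] rotate_filling_ssyt[OF T]
    by (simp add: L_skew_def poset_dual_def poset_sigma0_def)
qed

section \<open>Skew shapes as unions of columns\<close>

definition rows_reaching :: "int \<Rightarrow> nat list \<Rightarrow> int" where
  "rows_reaching c xs = int (length (takeWhile (\<lambda>x. c \<le> int x) xs))"

lemma le_nth_iff_less_rows_reaching:
  "sorted_wrt (\<ge>) xs \<Longrightarrow> j < length xs \<Longrightarrow> c \<le> int (xs ! j) \<longleftrightarrow> int j < rows_reaching c xs"
proof (induction xs arbitrary: j)
  case (Cons x xs)
  show ?case
  proof (cases j)
    case (Suc j')
    show ?thesis
    proof (cases "c \<le> int x")
      case False
      have "xs ! j' \<le> x" using Cons.prems Suc by auto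
      then show ?thesis using False Suc by (simp add: rows_reaching_def)
    qed (use Cons Suc in \<open>simp add: rows_reaching_def\<close>)
  qed (simp add: rows_reaching_def)
qed simp

lemma rows_reaching_antimono: "antimono (\<lambda>c. rows_reaching c xs)"
proof (rule antimonoI)
  fix c c' :: int assume "c \<le> c'"
  then show "rows_reaching c' xs \<le> rows_reaching c xs"
    unfolding rows_reaching_def by (induction xs) auto
qed

lemma rows_reaching_bounds: "0 \<le> rows_reaching c xs" "rows_reaching c xs \<le> int (length xs)"
  unfolding rows_reaching_def by (simp_all add: length_takeWhile_le)

lemma skew_shape_eq_column_cells:
  assumes "length Q = length P" "sorted_wrt (\<ge>) P" "sorted_wrt (\<ge>) Q"
  defines "a \<equiv> \<lambda>c. rows_reaching c Q" and "b \<equiv> \<lambda>c. rows_reaching c P"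
  shows "skew_shape P Q = column_cells {c. a c < b c} a b"
proof (intro set_eqI)
  fix x :: cell
  obtain r c where x: "x = (r, c)" by force
  have "x \<in> skew_shape P Q \<longleftrightarrow>
      (\<exists>j < length P. r = int j + 1 \<and> int (Q ! j) < c \<and> c \<le> int (P ! j))"
    unfolding x skew_shape_def by (auto intro!: exI[of _ "nat (r - 1)"])
  also have "\<dots> \<longleftrightarrow> (\<exists>j < length P. r = int j + 1 \<and> int j < b c \<and> \<not> int j < a c)"
    using le_nth_iff_less_rows_reaching[OF assms(2)] le_nth_iff_less_rows_reaching[OF assms(3)] assms(1)
    unfolding a_def b_def by (metis not_le)
  also have "\<dots> \<longleftrightarrow> x \<in> column_cells {c. a c < b c} a b"
    using rows_reaching_bounds[of c Q] rows_reaching_bounds[of c P]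
    unfolding x column_cells_def a_def b_def by (auto intro!: exI[of _ "nat (r - 1)"] split: if_splits)
  finally show "x \<in> skew_shape P Q \<longleftrightarrow> x \<in> column_cells {c. a c < b c} a b" .
qed

lemma col_rows_column_cells: "col_rows (column_cells {c. a c < b c} a b) c = {a c<..b c}"
  unfolding col_rows_def column_cells_def by auto

lemma nested_columnsI:
  assumes "antimono a" "antimono b" "\<forall>c. card (col_rows (column_cells {c. a c < b c} a b) c) \<le> n"
  shows "nested_columns n {c. a c < b c} a b"
proof -
  have "b c \<le> a c + int n" for c
  proof -
    have "nat (b c - a c) \<le> n" using assms(3) by (simp add: col_rows_column_cells)
    then show ?thesis by linarith
  qed
  then show ?thesis
    using antimonoD[OF assms(1)] antimonoD[OF assms(2)] by (auto simp: nested_columns_def)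
qed

lemma shape_sigma0_column_cells:
  "shape_sigma0 n (column_cells {c. a c < b c} a b) = column_cells {c. a c < b c} b (\<lambda>c. a c + int n)"
proof -
  have "Max {a c<..b c} = b c" "Min {a c<..b c} = a c + 1" if "a c < b c" for c
    using that by (auto intro!: Max_eqI Min_eqI)
  then show ?thesis
    unfolding shape_sigma0_def col_rows_column_cells by (auto simp: column_cells_def)
qed

theorem proposition8p2:
  fixes m n :: nat and P Q :: "nat list" and s :: sym
  assumes "2 \<le> n" and "n \<le> m"
    and "length P = m" and "length Q = m"
    and "sorted_wrt (\<ge>) P" and "sorted_wrt (\<ge>) Q"
    and "\<forall>r<m. Q ! r \<le> P ! r"
    and "\<forall>c. card (col_rows (skew_shape P Q) c) \<le> n"
  shows "cposet_iso (L_skew n (shape_op n s (skew_shape P Q)))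
                    (poset_op n s (L_skew n (skew_shape P Q)))"
proof -
  define a where "a = (\<lambda>c. rows_reaching c Q)"
  define b where "b = (\<lambda>c. rows_reaching c P)"
  have shape: "skew_shape P Q = column_cells {c. a c < b c} a b"
    using skew_shape_eq_column_cells[of Q P] assms(3-6) by (simp add: a_def b_def)
  have "nested_columns n {c. a c < b c} a b"
    using assms(8) rows_reaching_antimono unfolding shape a_def b_def by (intro nested_columnsI)
  then have sigma0: "cposet_iso (L_skew n (shape_sigma0 n (skew_shape P Q)))
      (poset_sigma0 n (L_skew n (skew_shape P Q)))"
    unfolding shape shape_sigma0_column_cells by (rule L_skew_column_complement_iso)
  show ?thesis
  proof (cases s)
    case Star
    have "cposet_iso (L_skew n (rot180 (shape_sigma0 n (skew_shape P Q))))
        (poset_dual (poset_sigma0 n (L_skew n (shape_sigma0 n (skew_shape P Q)))))"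
      by (rule L_skew_rot180_iso)
    also have "cposet_iso \<dots> (poset_dual (poset_sigma0 n (poset_sigma0 n (L_skew n (skew_shape P Q)))))"
      using sigma0 by (intro cposet_iso_poset_dual cposet_iso_poset_sigma0)
    also have "cposet_iso \<dots> (poset_dual (L_skew n (skew_shape P Q)))"
      using L_skew_edge_color by (intro cposet_iso_poset_dual poset_sigma0_involutive)
    finally show ?thesis using Star by simp
  qed (use sigma0 in \<open>simp_all add: cposet_iso_refl L_skew_rot180_iso\<close>)
qed

end
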